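(* Let $\alpha\in[1/2,1)\cup(1,\infty)$ and let $p_{X,Y}=p_Xp_{Y\mid X}$ be a joint distribution on finite alphabets $\mathcal X\times\mathcal Y$. Starting from initial distributions $q_X^{(0)}$ on $\mathcal X$ and $q_Y^{(0)}$ on $\mathcal Y$, let $\{q_X^{(k)}\}_{k\ge0}$ and $\{q_Y^{(k)}\}_{k\ge0}$ be generated by the alternating optimization algorithm which, at each step, replaces $q_X$ by $$q_X^*(x)=\frac{\big[\sum_yp_{X,Y}(x,y)^\alpha q_Y(y)^{1-\alpha}\big]^{1/\alpha}}{\sum_{x'}\big[\sum_yp_{X,Y}(x',y)^\alpha q_Y(y)^{1-\alpha}\big]^{1/\alpha}}$$ computed from the current $q_Y$, and then replaces $q_Y$ by $$q_Y^*(y)=\frac{\big[\sum_xp_{X,Y}(x,y)^\alpha q_X(x)^{1-\alpha}\big]^{1/\alpha}}{\sum_{y'}\big[\sum_xp_{X,Y}(x,y')^\alpha q_X(x)^{1-\alpha}\big]^{1/\alpha}}$$ computed from the current $q_X$ (these are the exact minimizers of $D_\alpha(p_Xp_{Y\mid X}\|q_Xq_Y)$ in one argument with the other fixed). Then $$\lim_{k\to\infty}D_\alpha(p_Xp_{Y\mid X}\|q_X^{(k)}q_Y^{(k)})=I_\alpha^{\mathrm{LP}}(X;Y).$$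
   Context: $D_\alpha(p\|q):=\frac{1}{\alpha-1}\log\sum_zp(z)^\alpha q(z)^{1-\alpha}$ is the Rényi divergence of order $\alpha$, and the Lapidoth–Pfister mutual information is $I_\alpha^{\mathrm{LP}}(X;Y):=\min_{q_X}\min_{q_Y}D_\alpha(p_Xp_{Y\mid X}\|q_Xq_Y)$. *)

theory Defs
  imports "HOL-Analysis.Analysis"
begin

definition is_dist :: "('a::finite \<Rightarrow> real) \<Rightarrow> bool" where
  "is_dist q \<longleftrightarrow> (\<forall>z. 0 \<le> q z) \<and> (\<Sum>z\<in>UNIV. q z) = 1"

text \<open>Renyi divergence of order alpha (natural logarithm), with the standard
  conventions: value +infinity if alpha > 1 and p is not absolutely continuous
  w.r.t. q, or if the sum is zero (disjoint supports, alpha < 1); terms with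
  p z = 0 contribute 0.\<close>
definition renyi_div :: "real \<Rightarrow> ('a::finite \<Rightarrow> real) \<Rightarrow> ('a \<Rightarrow> real) \<Rightarrow> ereal" where
  "renyi_div \<alpha> p q =
     (let s = (\<Sum>z\<in>UNIV. p z powr \<alpha> * q z powr (1 - \<alpha>)) in
      if (1 < \<alpha> \<and> (\<exists>z. 0 < p z \<and> q z = 0)) \<or> s = 0 then \<infinity>
      else ereal (ln s / (\<alpha> - 1)))"

definition I_LP :: "real \<Rightarrow> ('x::finite \<times> 'y::finite \<Rightarrow> real) \<Rightarrow> ereal" where
  "I_LP \<alpha> p = (INF qX\<in>{q. is_dist q}. INF qY\<in>{q. is_dist q}.
       renyi_div \<alpha> p (\<lambda>(x, y). qX x * qY y))"

definition qX_star :: "real \<Rightarrow> ('x::finite \<times> 'y::finite \<Rightarrow> real) \<Rightarrow> ('y \<Rightarrow> real) \<Rightarrow> 'x \<Rightarrow> real" where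
  "qX_star \<alpha> p qY x =
     (\<Sum>y\<in>UNIV. p (x, y) powr \<alpha> * qY y powr (1 - \<alpha>)) powr (1 / \<alpha>) /
     (\<Sum>x'\<in>UNIV. (\<Sum>y\<in>UNIV. p (x', y) powr \<alpha> * qY y powr (1 - \<alpha>)) powr (1 / \<alpha>))"

definition qY_star :: "real \<Rightarrow> ('x::finite \<times> 'y::finite \<Rightarrow> real) \<Rightarrow> ('x \<Rightarrow> real) \<Rightarrow> 'y \<Rightarrow> real" where
  "qY_star \<alpha> p qX y =
     (\<Sum>x\<in>UNIV. p (x, y) powr \<alpha> * qX x powr (1 - \<alpha>)) powr (1 / \<alpha>) /
     (\<Sum>y'\<in>UNIV. (\<Sum>x\<in>UNIV. p (x, y') powr \<alpha> * qX x powr (1 - \<alpha>)) powr (1 / \<alpha>))"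

end

theory Submission
  imports Defs
begin

text \<open>
  Put \<open>lp_sum \<alpha> p u v = \<Sum> p(x,y)^\<alpha> (u(x) v(y))^(1-\<alpha>)\<close>, so that
  \<open>D\<^sub>\<alpha>(p \<parallel> u \<otimes> v) = ln (lp_sum \<alpha> p u v) / (\<alpha> - 1)\<close>: minimising the divergence means maximising
  \<open>lp_sum\<close> for \<open>\<alpha> < 1\<close> and minimising it for \<open>\<alpha> > 1\<close>.  Inequalities are stated in the form
  \<open>0 \<le> (\<alpha> - 1) * (X - Y)\<close>, which covers both regimes at once.

  By weighted AM-GM the Renyi sum \<open>\<rho>(f, g) = \<Sum> f^\<alpha> g^(1-\<alpha>)\<close> of two distributions lies on the
  same side of \<open>1\<close> as \<open>\<alpha>\<close>, and \<open>lp_sum \<alpha> p u v = Z(v)^\<alpha> \<rho>(q\<^sup>*\<^sub>X(v), u)\<close> with \<open>Z(v)^\<alpha> = lp_sum \<alpha> p (q\<^sup>*\<^sub>X(v)) v\<close>.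
  So every half-step improves \<open>lp_sum\<close>, its values converge to some \<open>L > 0\<close>, and the Renyi sums of
  consecutive iterates tend to \<open>1\<close>.

  For \<open>\<alpha> \<noteq> 1/2\<close> the iterates stay bounded away from \<open>0\<close> on the support of \<open>p\<close>, hence ratios of
  consecutive iterates tend to \<open>1\<close>.  As \<open>(s, t) \<mapsto> (s t)^(1-\<alpha>)\<close> is concave for \<open>1/2 \<le> \<alpha> < 1\<close> and
  convex for \<open>\<alpha> > 1\<close>, its tangent planes at the iterates bound \<open>lp_sum \<alpha> p u v\<close> for arbitrary
  \<open>u, v\<close>; the optimality of each half-step turns these bounds into \<open>L\<close> in the limit.

  For \<open>\<alpha> = 1/2\<close>, \<open>lp_sum\<close> is the bilinear form of the matrix \<open>(\<surd>p(x,y))\<close> at \<open>(\<surd>u, \<surd>v)\<close> and the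
  algorithm is a power iteration.  Comparing, via the symmetry of \<open>\<rho>\<close>, the iteration started at an
  arbitrary \<open>v\<close> with the given one shows \<open>Z(v)^(1/2) \<le> L\<close>, which bounds \<open>lp_sum\<close> everywhere.
\<close>

section \<open>Weighted means of powers\<close>

lemma weighted_am_gm:
  fixes g a b :: real
  assumes "0 \<le> g" "g \<le> 1" "0 \<le> a" "0 \<le> b"
  shows "a powr g * b powr (1 - g) \<le> g * a + (1 - g) * b"
proof (cases "a = 0 \<or> b = 0")
  case True
  then show ?thesis using assms by auto
next
  case False
  then show ?thesis using Youngs_inequality_0[of g "1 - g" a b] assms by auto
qed

lemma weighted_am_gm_reverse:
  fixes g a b :: real
  assumes "1 \<le> g" "0 \<le> a" "0 < b"
  shows "g * a - (g - 1) * b \<le> a powr g * b powr (1 - g)"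
proof -
  define c where "c = a powr g * b powr (1 - g)"
  have "c powr (1/g) * b powr (1 - 1/g) = a"
    using assms by (simp add: c_def powr_mult powr_powr field_simps flip: powr_add)
  moreover have "c powr (1/g) * b powr (1 - 1/g) \<le> c / g + (1 - 1/g) * b"
    using weighted_am_gm[of "1/g" c b] assms by (simp add: c_def)
  ultimately have "g * a \<le> g * (c / g + (1 - 1/g) * b)"
    using assms by (intro mult_left_mono) auto
  also have "\<dots> = c + (g - 1) * b"
    using assms by (simp add: field_simps)
  finally show ?thesis by (simp add: c_def)
qed

lemma weighted_am_gm_sign:
  fixes \<alpha> a b :: real
  assumes "0 \<le> \<alpha>" "0 \<le> a" "0 \<le> b" "1 < \<alpha> \<Longrightarrow> 0 < a \<Longrightarrow> 0 < b"
  shows "0 \<le> (\<alpha> - 1) * (a powr \<alpha> * b powr (1 - \<alpha>) - \<alpha> * a - (1 - \<alpha>) * b)"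
proof (cases "\<alpha> \<le> 1")
  case True
  then have "a powr \<alpha> * b powr (1 - \<alpha>) \<le> \<alpha> * a + (1 - \<alpha>) * b"
    using assms by (intro weighted_am_gm) auto
  then show ?thesis using True by (intro mult_nonpos_nonpos) auto
next
  case False
  have "\<alpha> * a - (\<alpha> - 1) * b \<le> a powr \<alpha> * b powr (1 - \<alpha>)"
  proof (cases "b = 0")
    case True
    then show ?thesis using assms False by fastforce
  next
    case False
    then show ?thesis using assms \<open>\<not> \<alpha> \<le> 1\<close> by (intro weighted_am_gm_reverse) auto
  qed
  then show ?thesis using False by (intro mult_nonneg_nonneg) (auto simp: algebra_simps)
qed

text \<open>The map \<open>(a, b) \<mapsto> (a * b) powr (1 - \<alpha>)\<close> is concave for \<open>1/2 \<le> \<alpha> < 1\<close> (this is where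
  \<open>\<alpha> \<ge> 1/2\<close> is needed) and convex for \<open>1 < \<alpha>\<close>; compare it with its tangent plane at \<open>(1, 1)\<close>.\<close>
lemma powr_prod_tangent_sign:
  fixes \<alpha> a b :: real
  assumes "1/2 \<le> \<alpha>" "0 \<le> a" "0 \<le> b" "1 < \<alpha> \<Longrightarrow> 0 < a \<and> 0 < b"
  shows "0 \<le> (\<alpha> - 1) * ((a * b) powr (1 - \<alpha>) - (2 * \<alpha> - 1) - (1 - \<alpha>) * a - (1 - \<alpha>) * b)"
proof -
  define m where "m = (a + b) / 2"
  have gm: "(a * b) powr (1 - \<alpha>) = sqrt (a * b) powr (2 * (1 - \<alpha>))"
    using assms by (simp add: powr_half_sqrt [symmetric] powr_powr diff_divide_distrib)
  have "sqrt (a * b) \<le> m"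
    using arith_geo_mean_sqrt[of a b] assms by (simp add: m_def)
  have mono: "0 \<le> (\<alpha> - 1) * (sqrt (a * b) powr (2 * (1 - \<alpha>)) - m powr (2 * (1 - \<alpha>)))"
  proof (cases "\<alpha> \<le> 1")
    case True
    then have "sqrt (a * b) powr (2 * (1 - \<alpha>)) \<le> m powr (2 * (1 - \<alpha>))"
      using \<open>sqrt (a * b) \<le> m\<close> assms by (intro powr_mono2) auto
    then show ?thesis using True by (intro mult_nonpos_nonpos) auto
  next
    case False
    then have "m powr (2 * (1 - \<alpha>)) \<le> sqrt (a * b) powr (2 * (1 - \<alpha>))"
      using \<open>sqrt (a * b) \<le> m\<close> assms by (intro powr_mono2') auto
    then show ?thesis using False by (intro mult_nonneg_nonneg) auto
  qed
  have "0 \<le> (2 * \<alpha> - 1 - 1) * (1 powr (2 * \<alpha> - 1) * m powr (1 - (2 * \<alpha> - 1))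
      - (2 * \<alpha> - 1) * 1 - (1 - (2 * \<alpha> - 1)) * m)"
    using assms by (intro weighted_am_gm_sign) (auto simp: m_def)
  also have "1 - (2 * \<alpha> - 1) = 2 * (1 - \<alpha>)" by simp
  finally have chord: "0 \<le> (\<alpha> - 1) * (m powr (2 * (1 - \<alpha>)) - (2 * \<alpha> - 1) - 2 * (1 - \<alpha>) * m)"
    by (simp add: algebra_simps)
  have "(\<alpha> - 1) * ((a * b) powr (1 - \<alpha>) - (2 * \<alpha> - 1) - (1 - \<alpha>) * a - (1 - \<alpha>) * b)
      = (\<alpha> - 1) * (sqrt (a * b) powr (2 * (1 - \<alpha>)) - m powr (2 * (1 - \<alpha>)))
      + (\<alpha> - 1) * (m powr (2 * (1 - \<alpha>)) - (2 * \<alpha> - 1) - 2 * (1 - \<alpha>) * m)"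
    unfolding gm by (simp add: m_def field_simps)
  then show ?thesis using mono chord by linarith
qed

lemma powr_prod_tangent_sign_at:
  fixes \<alpha> s t s0 t0 :: real
  assumes "1/2 \<le> \<alpha>" "0 < s0" "0 < t0" "0 \<le> s" "0 \<le> t" "1 < \<alpha> \<Longrightarrow> 0 < s \<and> 0 < t"
  shows "0 \<le> (\<alpha> - 1) * ((s * t) powr (1 - \<alpha>) - ((2 * \<alpha> - 1) * (s0 * t0) powr (1 - \<alpha>)
    + (1 - \<alpha>) * s * (s0 powr (1 - \<alpha>) / s0) * t0 powr (1 - \<alpha>)
    + (1 - \<alpha>) * t * s0 powr (1 - \<alpha>) * (t0 powr (1 - \<alpha>) / t0)))"
proof -
  define a b where "a = s / s0" and "b = t / t0"
  have ab: "0 \<le> a" "0 \<le> b" "1 < \<alpha> \<Longrightarrow> 0 < a \<and> 0 < b"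
    using assms by (auto simp: a_def b_def)
  have P: "s0 powr (1 - \<alpha>) * t0 powr (1 - \<alpha>) = (s0 * t0) powr (1 - \<alpha>)"
    using assms by (simp add: powr_mult)
  have e1: "(s * t) powr (1 - \<alpha>) = (s0 * t0) powr (1 - \<alpha>) * (a * b) powr (1 - \<alpha>)"
    using assms ab by (simp add: a_def b_def powr_mult [symmetric])
  have e2: "(1 - \<alpha>) * s * (s0 powr (1 - \<alpha>) / s0) * t0 powr (1 - \<alpha>) = (s0 * t0) powr (1 - \<alpha>) * ((1 - \<alpha>) * a)"
    using assms by (simp add: a_def P [symmetric] field_simps)
  have e3: "(1 - \<alpha>) * t * s0 powr (1 - \<alpha>) * (t0 powr (1 - \<alpha>) / t0) = (s0 * t0) powr (1 - \<alpha>) * ((1 - \<alpha>) * b)"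
    using assms by (simp add: b_def P [symmetric] field_simps)
  have "(\<alpha> - 1) * ((s * t) powr (1 - \<alpha>) - ((2 * \<alpha> - 1) * (s0 * t0) powr (1 - \<alpha>)
    + (1 - \<alpha>) * s * (s0 powr (1 - \<alpha>) / s0) * t0 powr (1 - \<alpha>)
    + (1 - \<alpha>) * t * s0 powr (1 - \<alpha>) * (t0 powr (1 - \<alpha>) / t0)))
    = (s0 * t0) powr (1 - \<alpha>) * ((\<alpha> - 1) * ((a * b) powr (1 - \<alpha>) - (2 * \<alpha> - 1) - (1 - \<alpha>) * a - (1 - \<alpha>) * b))"
    unfolding e1 e2 e3 by (simp add: algebra_simps)
  also have "0 \<le> \<dots>"
    using assms(1) ab by (intro mult_nonneg_nonneg[OF powr_ge_zero] powr_prod_tangent_sign)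
  finally show ?thesis .
qed

lemma powr_div_self_mult:
  fixes t w :: real
  assumes "0 \<le> t" "0 \<le> w"
  shows "t powr (1 - \<alpha>) / t * w powr \<alpha> = (w / t) powr \<alpha>"
proof (cases "t = 0")
  case False
  then have "t powr (1 - \<alpha>) = t / t powr \<alpha>"
    using assms by (simp add: powr_diff)
  then show ?thesis
    using assms False by (simp add: powr_divide)
qed simp

lemma powr_deviation_lt1:
  fixes \<alpha> t :: real
  assumes "0 < \<alpha>" "\<alpha> < 1" "0 \<le> t"
  shows "t powr \<alpha> - 1 - \<alpha> * (t - 1) \<le> - (\<alpha> * (1 - \<alpha>)) * (sqrt t - 1)\<^sup>2"
proof -
  define s where "s = sqrt t"
  have s: "0 \<le> s" "t = s\<^sup>2" using assms by (auto simp: s_def)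
  have "s powr \<alpha> \<le> \<alpha> * s + (1 - \<alpha>)"
    using weighted_am_gm[of \<alpha> s 1] assms s by simp
  moreover have "t powr \<alpha> = (s powr \<alpha>)\<^sup>2"
    using s by (simp add: power2_eq_square powr_mult)
  ultimately have "t powr \<alpha> \<le> (\<alpha> * s + (1 - \<alpha>))\<^sup>2"
    by (simp add: power_mono)
  then show ?thesis using s by (simp add: s_def [symmetric] power2_eq_square algebra_simps)
qed

text \<open>The case \<open>1 < \<alpha>\<close> reduces to \<open>powr_deviation_lt1\<close> for the exponent \<open>1 / \<alpha>\<close> at \<open>t powr \<alpha>\<close>.\<close>
lemma powr_deviation_sqrt_bound:
  fixes \<alpha> :: real
  assumes "0 < \<alpha>" "\<alpha> \<noteq> 1"
  shows "\<exists>\<kappa>>0. \<forall>t\<ge>0. \<kappa> * (sqrt t - 1)\<^sup>2 \<le> (\<alpha> - 1) * (t powr \<alpha> - 1 - \<alpha> * (t - 1))"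
proof (cases "\<alpha> < 1")
  case True
  show ?thesis
  proof (intro exI[of _ "\<alpha> * (1 - \<alpha>)\<^sup>2"] conjI allI impI)
    fix t :: real assume "0 \<le> t"
    then have "\<alpha> * (1 - \<alpha>) * (sqrt t - 1)\<^sup>2 \<le> - (t powr \<alpha> - 1 - \<alpha> * (t - 1))"
      using powr_deviation_lt1[OF assms(1) True] by force
    from mult_left_mono[OF this, of "1 - \<alpha>"] True show "\<alpha> * (1 - \<alpha>)\<^sup>2 * (sqrt t - 1)\<^sup>2 \<le> (\<alpha> - 1) * (t powr \<alpha> - 1 - \<alpha> * (t - 1))"
      by (simp add: power2_eq_square algebra_simps)
  qed (use assms True in auto)
next
  case False
  then have gt: "1 < \<alpha>" using assms by simp
  show ?thesis
  proof (intro exI[of _ "(\<alpha> - 1)\<^sup>2 / \<alpha>"] conjI allI impI)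
    fix t :: real assume t: "0 \<le> t"
    define w where "w = t powr \<alpha>"
    have w: "0 \<le> w" "w powr (1 / \<alpha>) = t" "sqrt w = sqrt t powr \<alpha>"
      using t assms by (auto simp: w_def powr_powr powr_half_sqrt [symmetric])
    have "w powr (1 / \<alpha>) - 1 - (1 / \<alpha>) * (w - 1) \<le> - ((1 / \<alpha>) * (1 - 1 / \<alpha>)) * (sqrt w - 1)\<^sup>2"
      using gt w by (intro powr_deviation_lt1) auto
    from mult_left_mono[OF this, of \<alpha>]
    have dual: "(\<alpha> - 1) / \<alpha> * (sqrt w - 1)\<^sup>2 \<le> t powr \<alpha> - 1 - \<alpha> * (t - 1)"
      using gt w by (simp add: w_def algebra_simps diff_divide_distrib)
    have "\<bar>sqrt t - 1\<bar> \<le> \<bar>sqrt t powr \<alpha> - 1\<bar>"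
    proof (cases "1 \<le> sqrt t")
      case True
      then have "sqrt t powr 1 \<le> sqrt t powr \<alpha>" using gt by (intro powr_mono) auto
      then show ?thesis using True by simp
    next
      case False
      then have "sqrt t powr \<alpha> \<le> sqrt t powr 1" using gt t by (intro powr_mono') auto
      then show ?thesis using False t by simp
    qed
    then have "(sqrt t - 1)\<^sup>2 \<le> (sqrt w - 1)\<^sup>2"
      unfolding w(3) by (metis abs_ge_zero power2_abs power_mono)
    then have "(\<alpha> - 1) / \<alpha> * (sqrt t - 1)\<^sup>2 \<le> (\<alpha> - 1) / \<alpha> * (sqrt w - 1)\<^sup>2"
      using gt by (intro mult_left_mono) auto
    then have "(\<alpha> - 1) / \<alpha> * (sqrt t - 1)\<^sup>2 \<le> t powr \<alpha> - 1 - \<alpha> * (t - 1)"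
      using dual by linarith
    from mult_left_mono[OF this, of "\<alpha> - 1"] gt
    show "(\<alpha> - 1)\<^sup>2 / \<alpha> * (sqrt t - 1)\<^sup>2 \<le> (\<alpha> - 1) * (t powr \<alpha> - 1 - \<alpha> * (t - 1))"
      by (simp add: power2_eq_square)
  qed (use gt in auto)
qed

lemma lower_bound_of_sublinear_recurrence:
  fixes z :: "nat \<Rightarrow> real"
  assumes "0 < C" "0 \<le> g" "g < 1" "0 < z 0" "\<And>k. C * z k powr g \<le> z (Suc k)"
  shows "\<exists>\<delta>>0. \<forall>k. \<delta> \<le> z k"
proof -
  define \<delta> where "\<delta> = min (z 0) (C powr (1 / (1 - g)))"
  have \<delta>: "0 < \<delta>" using assms by (simp add: \<delta>_def)
  have "\<delta> powr (1 - g) \<le> (C powr (1 / (1 - g))) powr (1 - g)"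
    using \<delta> assms by (intro powr_mono2) (auto simp: \<delta>_def)
  also have "\<dots> = C" using assms by (simp add: powr_powr)
  finally have "\<delta> powr (1 - g) * \<delta> powr g \<le> C * \<delta> powr g"
    by (simp add: mult_right_mono)
  then have step: "\<delta> \<le> C * \<delta> powr g" using \<delta> by (simp flip: powr_add)
  have "\<delta> \<le> z k" for k
  proof (induction k)
    case 0
    then show ?case by (simp add: \<delta>_def)
  next
    case (Suc k)
    have "C * \<delta> powr g \<le> C * z k powr g"
      using Suc \<delta> assms by (intro mult_left_mono powr_mono2) auto
    then show ?case using step assms(5)[of k] by linarith
  qed
  then show ?thesis using \<delta> by blast
qed

lemma le_if_powers_bounded:
  fixes a b \<mu> :: real
  assumes "0 < \<mu>" "0 < b" "\<And>n. a ^ n * \<mu> \<le> b ^ n"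
  shows "a \<le> b"
proof (rule ccontr)
  assume "\<not> a \<le> b"
  then have "1 < a / b" using assms by simp
  then obtain n where "1 / \<mu> < (a / b) ^ n" using real_arch_pow by blast
  then have "b ^ n < a ^ n * \<mu>" using assms by (simp add: power_divide divide_simps)
  then show False using assms(3)[of n] by simp
qed

lemma ratio_tendsto_one_if_am_gm_gap_tendsto_zero:
  fixes a b :: "nat \<Rightarrow> real"
  assumes "0 < \<alpha>" "\<alpha> \<noteq> 1" "0 < \<delta>" "\<And>k. \<delta> \<le> b k" "\<And>k. 0 \<le> a k"
    and gap: "(\<lambda>k. (\<alpha> - 1) * (a k powr \<alpha> * b k powr (1 - \<alpha>) - \<alpha> * a k - (1 - \<alpha>) * b k)) \<longlonglongrightarrow> 0"
  shows "(\<lambda>k. a k / b k) \<longlonglongrightarrow> 1"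
proof -
  obtain \<kappa> where \<kappa>: "0 < \<kappa>" "\<And>t. 0 \<le> t \<Longrightarrow> \<kappa> * (sqrt t - 1)\<^sup>2 \<le> (\<alpha> - 1) * (t powr \<alpha> - 1 - \<alpha> * (t - 1))"
    using powr_deviation_sqrt_bound[OF assms(1,2)] by blast
  define t where "t k = a k / b k" for k
  define e where "e k = (\<alpha> - 1) * (a k powr \<alpha> * b k powr (1 - \<alpha>) - \<alpha> * a k - (1 - \<alpha>) * b k)" for k
  have b: "0 < b k" for k using assms(3,4) order.strict_trans2 by blast
  have t: "0 \<le> t k" for k using b[of k] assms(5)[of k] by (simp add: t_def)
  have e_eq: "e k = b k * ((\<alpha> - 1) * (t k powr \<alpha> - 1 - \<alpha> * (t k - 1)))" for k
  proof -
    have a: "a k = t k * b k" using b[of k] by (simp add: t_def)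
    have "a k powr \<alpha> * b k powr (1 - \<alpha>) = t k powr \<alpha> * (b k powr \<alpha> * b k powr (1 - \<alpha>))"
      unfolding a using t[of k] b[of k] by (simp add: powr_mult)
    also have "b k powr \<alpha> * b k powr (1 - \<alpha>) = b k"
      using b[of k] by (simp flip: powr_add)
    finally show ?thesis unfolding e_def a by (simp add: algebra_simps)
  qed
  have sq_bound: "(sqrt (t k) - 1)\<^sup>2 \<le> e k / (\<kappa> * \<delta>)" for k
  proof -
    have "\<delta> * (\<kappa> * (sqrt (t k) - 1)\<^sup>2) \<le> b k * (\<kappa> * (sqrt (t k) - 1)\<^sup>2)"
      using assms(4)[of k] \<kappa>(1) by (intro mult_right_mono) auto
    also have "\<dots> \<le> e k"
      unfolding e_eq using \<kappa>(2)[OF t] b[of k] by (intro mult_left_mono) auto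
    finally show ?thesis using \<kappa>(1) assms(3) by (simp add: pos_le_divide_eq mult_ac)
  qed
  have "(\<lambda>k. e k) \<longlonglongrightarrow> 0"
    unfolding e_def by (fact gap)
  then have lim: "(\<lambda>k. e k / (\<kappa> * \<delta>)) \<longlonglongrightarrow> 0"
    by (rule tendsto_divide_zero)
  have "\<forall>\<^sub>F k in sequentially. norm ((sqrt (t k) - 1)\<^sup>2) \<le> e k / (\<kappa> * \<delta>)"
    using sq_bound by simp
  from Lim_null_comparison[OF this lim]
  have "(\<lambda>k. sqrt ((sqrt (t k) - 1)\<^sup>2)) \<longlonglongrightarrow> sqrt 0"
    by (rule tendsto_real_sqrt)
  then have "(\<lambda>k. sqrt (t k)) \<longlonglongrightarrow> 1"
    by (simp add: tendsto_rabs_zero_iff LIM_zero_iff)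
  then have "(\<lambda>k. (sqrt (t k))\<^sup>2) \<longlonglongrightarrow> 1\<^sup>2"
    by (rule tendsto_power)
  then show ?thesis using t by (simp add: t_def)
qed

lemma ln_div_le_ln_div:
  fixes \<alpha> a b :: real
  assumes "0 < a" "0 < b" "0 \<le> (\<alpha> - 1) * (b - a)"
  shows "ln a / (\<alpha> - 1) \<le> ln b / (\<alpha> - 1)"
proof (cases "\<alpha> < 1")
  case True
  then have "b \<le> a" using assms(3) by (simp add: zero_le_mult_iff)
  then show ?thesis using assms True by (intro divide_right_mono_neg) auto
next
  case False
  then have "a \<le> b \<or> \<alpha> = 1" using assms(3) by (auto simp: zero_le_mult_iff)
  then show ?thesis using assms False by (auto intro: divide_right_mono)
qed

section \<open>Renyi sums\<close>

lemma is_dist_nonneg: "is_dist q \<Longrightarrow> 0 \<le> q z"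
  by (simp add: is_dist_def)

lemma is_dist_le_one:
  assumes "is_dist q" shows "q z \<le> 1"
proof -
  have "q z \<le> (\<Sum>z\<in>UNIV. q z)"
    by (rule member_le_sum) (auto simp: is_dist_nonneg[OF assms])
  then show ?thesis using assms by (simp add: is_dist_def)
qed

lemma is_dist_ex_pos:
  assumes "is_dist q" shows "\<exists>z. 0 < q z"
proof (rule ccontr)
  assume "\<not> ?thesis"
  then have "q z \<le> 0" for z by (simp add: not_less)
  then have "q z = 0" for z using is_dist_nonneg[OF assms, of z] by (simp add: order.antisym)
  then show False using assms by (simp add: is_dist_def)
qed

lemma is_dist_prod:
  assumes "is_dist u" "is_dist v"
  shows "is_dist (\<lambda>(x, y). u x * v y)"
proof -
  have "(\<Sum>z\<in>UNIV. case z of (x, y) \<Rightarrow> u x * v y) = (\<Sum>x\<in>UNIV. u x) * (\<Sum>y\<in>UNIV. v y)"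
    by (simp add: sum_product sum.cartesian_product flip: UNIV_Times_UNIV)
  then show ?thesis using assms by (auto simp: is_dist_def)
qed

definition renyi_sum :: "real \<Rightarrow> ('a::finite \<Rightarrow> real) \<Rightarrow> ('a \<Rightarrow> real) \<Rightarrow> real" where
  "renyi_sum \<alpha> f g = (\<Sum>z\<in>UNIV. f z powr \<alpha> * g z powr (1 - \<alpha>))"

lemma renyi_sum_nonneg: "0 \<le> renyi_sum \<alpha> f g"
  by (simp add: renyi_sum_def sum_nonneg)

lemma renyi_sum_self: "(\<And>z. 0 \<le> f z) \<Longrightarrow> renyi_sum \<alpha> f f = (\<Sum>z\<in>UNIV. f z)"
  by (simp add: renyi_sum_def flip: powr_add)

lemma renyi_sum_half_commute: "renyi_sum (1/2) f g = renyi_sum (1/2) g f"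
  by (simp add: renyi_sum_def mult.commute)

lemma renyi_sum_minus_one_eq_sum:
  assumes "is_dist f" "is_dist g"
  shows "(\<alpha> - 1) * (renyi_sum \<alpha> f g - 1)
    = (\<Sum>z\<in>UNIV. (\<alpha> - 1) * (f z powr \<alpha> * g z powr (1 - \<alpha>) - \<alpha> * f z - (1 - \<alpha>) * g z))"
proof -
  have "(\<Sum>z\<in>UNIV. (\<alpha> - 1) * (f z powr \<alpha> * g z powr (1 - \<alpha>) - \<alpha> * f z - (1 - \<alpha>) * g z))
      = (\<alpha> - 1) * (renyi_sum \<alpha> f g - \<alpha> * (\<Sum>z\<in>UNIV. f z) - (1 - \<alpha>) * (\<Sum>z\<in>UNIV. g z))"
    by (simp add: renyi_sum_def sum_subtractf sum_distrib_left right_diff_distrib)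
  then show ?thesis using assms by (simp add: is_dist_def algebra_simps)
qed

lemma renyi_sum_sign:
  assumes "0 \<le> \<alpha>" "is_dist f" "is_dist g" "1 < \<alpha> \<Longrightarrow> \<forall>z. 0 < f z \<longrightarrow> 0 < g z"
  shows "0 \<le> (\<alpha> - 1) * (renyi_sum \<alpha> f g - 1)"
  unfolding renyi_sum_minus_one_eq_sum[OF assms(2,3)]
  using assms by (intro sum_nonneg weighted_am_gm_sign) (auto simp: is_dist_nonneg)

lemma renyi_sum_le_one:
  "0 \<le> \<alpha> \<Longrightarrow> \<alpha> < 1 \<Longrightarrow> is_dist f \<Longrightarrow> is_dist g \<Longrightarrow> renyi_sum \<alpha> f g \<le> 1"
  using renyi_sum_sign[of \<alpha> f g] by (auto simp: zero_le_mult_iff)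

lemma renyi_sum_ge_min:
  assumes "0 \<le> \<alpha>" "\<alpha> \<le> 1" "is_dist f" "\<And>z. \<mu> \<le> g z powr (1 - \<alpha>)" "0 \<le> \<mu>"
  shows "\<mu> \<le> renyi_sum \<alpha> f g"
proof -
  have "(\<Sum>z\<in>UNIV. f z * \<mu>) \<le> renyi_sum \<alpha> f g"
    unfolding renyi_sum_def
  proof (intro sum_mono mult_mono)
    fix z
    show "f z \<le> f z powr \<alpha>"
      using powr_mono'[of \<alpha> 1 "f z"] assms is_dist_nonneg[of f z] is_dist_le_one[of f z]
      by (cases "f z = 0") auto
  qed (use assms is_dist_nonneg in auto)
  then show ?thesis using assms(3) by (simp add: is_dist_def flip: sum_distrib_right)
qed

definition lp_sum :: "real \<Rightarrow> ('x::finite \<times> 'y::finite \<Rightarrow> real) \<Rightarrow> ('x \<Rightarrow> real) \<Rightarrow> ('y \<Rightarrow> real) \<Rightarrow> real"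
  where "lp_sum \<alpha> p u v = renyi_sum \<alpha> p (\<lambda>(x, y). u x * v y)"

lemma lp_sum_eq_double_sum:
  "lp_sum \<alpha> p u v = (\<Sum>x\<in>UNIV. \<Sum>y\<in>UNIV. p (x, y) powr \<alpha> * (u x * v y) powr (1 - \<alpha>))"
  by (simp add: lp_sum_def renyi_sum_def sum.cartesian_product case_prod_unfold flip: UNIV_Times_UNIV)

lemma lp_sum_swap: "lp_sum \<alpha> (p \<circ> prod.swap) v u = lp_sum \<alpha> p u v"
  unfolding lp_sum_eq_double_sum by (subst sum.swap) (simp add: mult.commute)

lemma lp_sum_nonneg: "0 \<le> lp_sum \<alpha> p u v"
  by (simp add: lp_sum_def renyi_sum_nonneg)

lemma lp_sum_term_le: "p (x, y) powr \<alpha> * (u x * v y) powr (1 - \<alpha>) \<le> lp_sum \<alpha> p u v"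
  unfolding lp_sum_def renyi_sum_def
  by (rule member_le_sum[where i = "(x, y)" and f = "\<lambda>z. p z powr \<alpha> * (case z of (x, y) \<Rightarrow> u x * v y) powr (1 - \<alpha>)", simplified]) auto

lemma lp_sum_pos: "0 < p (x, y) \<Longrightarrow> 0 < u x \<Longrightarrow> 0 < v y \<Longrightarrow> 0 < lp_sum \<alpha> p u v"
  by (rule less_le_trans[OF _ lp_sum_term_le[of p x y]]) simp

lemma lp_sum_sign:
  assumes "0 \<le> \<alpha>" "is_dist p" "is_dist u" "is_dist v"
    and "1 < \<alpha> \<Longrightarrow> \<forall>x y. 0 < p (x, y) \<longrightarrow> 0 < u x \<and> 0 < v y"
  shows "0 \<le> (\<alpha> - 1) * (lp_sum \<alpha> p u v - 1)"
  unfolding lp_sum_def using assms is_dist_prod[OF assms(3,4)]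
  by (intro renyi_sum_sign) auto

lemma renyi_div_prod_eq:
  "renyi_div \<alpha> p (\<lambda>(x, y). u x * v y) =
    (if (1 < \<alpha> \<and> (\<exists>x y. 0 < p (x, y) \<and> u x * v y = 0)) \<or> lp_sum \<alpha> p u v = 0 then \<infinity>
     else ereal (ln (lp_sum \<alpha> p u v) / (\<alpha> - 1)))"
  by (simp add: renyi_div_def lp_sum_def renyi_sum_def split_paired_Ex)

section \<open>The one-sided minimisers\<close>

definition qX_tilt :: "real \<Rightarrow> ('x::finite \<times> 'y::finite \<Rightarrow> real) \<Rightarrow> ('y \<Rightarrow> real) \<Rightarrow> 'x \<Rightarrow> real"
  where "qX_tilt \<alpha> p v x = (\<Sum>y\<in>UNIV. p (x, y) powr \<alpha> * v y powr (1 - \<alpha>))"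

definition qX_norm :: "real \<Rightarrow> ('x::finite \<times> 'y::finite \<Rightarrow> real) \<Rightarrow> ('y \<Rightarrow> real) \<Rightarrow> real"
  where "qX_norm \<alpha> p v = (\<Sum>x\<in>UNIV. qX_tilt \<alpha> p v x powr (1 / \<alpha>))"

lemma qX_star_eq: "qX_star \<alpha> p v x = qX_tilt \<alpha> p v x powr (1 / \<alpha>) / qX_norm \<alpha> p v"
  by (simp add: qX_star_def qX_tilt_def qX_norm_def)

text \<open>The \<open>Y\<close>-step is the \<open>X\<close>-step for the transposed distribution \<open>p \<circ> prod.swap\<close>, so only the
  \<open>X\<close>-side is developed; \<open>Y\<close>-side facts are obtained by transposition.\<close>
lemma qY_star_eq_qX_star_swap: "qY_star \<alpha> p = qX_star \<alpha> (p \<circ> prod.swap)"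
  by (simp add: fun_eq_iff qY_star_def qX_star_def)

lemma qX_tilt_nonneg: "0 \<le> qX_tilt \<alpha> p v x"
  by (simp add: qX_tilt_def sum_nonneg)

lemma qX_norm_nonneg: "0 \<le> qX_norm \<alpha> p v"
  by (simp add: qX_norm_def sum_nonneg)

lemma qX_star_nonneg: "0 \<le> qX_star \<alpha> p v x"
  by (simp add: qX_star_eq qX_norm_nonneg)

lemma qX_tilt_eq:
  assumes "\<alpha> \<noteq> 0"
  shows "qX_tilt \<alpha> p v x = qX_norm \<alpha> p v powr \<alpha> * qX_star \<alpha> p v x powr \<alpha>"
proof (cases "qX_norm \<alpha> p v = 0")
  case True
  then have "qX_tilt \<alpha> p v x powr (1 / \<alpha>) = 0"
    unfolding qX_norm_def by (simp add: sum_nonneg_eq_0_iff)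
  then show ?thesis using True by simp
next
  case False
  then show ?thesis using assms qX_norm_nonneg[of \<alpha> p v] qX_tilt_nonneg[of \<alpha> p v x]
    by (simp add: qX_star_eq powr_divide powr_powr)
qed

lemma lp_sum_eq_qX_norm_renyi_sum:
  assumes "\<alpha> \<noteq> 0"
  shows "lp_sum \<alpha> p u v = qX_norm \<alpha> p v powr \<alpha> * renyi_sum \<alpha> (qX_star \<alpha> p v) u"
proof -
  have "lp_sum \<alpha> p u v = (\<Sum>x\<in>UNIV. u x powr (1 - \<alpha>) * qX_tilt \<alpha> p v x)"
    by (simp add: lp_sum_eq_double_sum qX_tilt_def powr_mult sum_distrib_left mult_ac)
  then show ?thesis
    by (simp add: qX_tilt_eq[OF assms] renyi_sum_def sum_distrib_left mult_ac)
qed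

lemma is_dist_qX_star:
  assumes "0 < qX_norm \<alpha> p v"
  shows "is_dist (qX_star \<alpha> p v)"
proof -
  have "(\<Sum>x\<in>UNIV. qX_star \<alpha> p v x) = 1"
    using assms by (simp add: qX_star_eq qX_norm_def [symmetric] flip: sum_divide_distrib)
  then show ?thesis by (simp add: is_dist_def qX_star_nonneg)
qed

lemma lp_sum_qX_star:
  assumes "\<alpha> \<noteq> 0"
  shows "lp_sum \<alpha> p (qX_star \<alpha> p v) v = qX_norm \<alpha> p v powr \<alpha>"
proof (cases "qX_norm \<alpha> p v = 0")
  case False
  then have "is_dist (qX_star \<alpha> p v)"
    using qX_norm_nonneg[of \<alpha> p v] by (simp add: is_dist_qX_star)
  then show ?thesis
    by (simp add: lp_sum_eq_qX_norm_renyi_sum[OF assms] renyi_sum_self qX_star_nonneg is_dist_def)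
qed (simp add: lp_sum_eq_qX_norm_renyi_sum[OF assms])

lemma qX_tilt_pos:
  assumes "0 < p (x, y)" "0 < v y"
  shows "0 < qX_tilt \<alpha> p v x"
proof -
  have "0 < p (x, y) powr \<alpha> * v y powr (1 - \<alpha>)" using assms by simp
  also have "\<dots> \<le> qX_tilt \<alpha> p v x"
    unfolding qX_tilt_def by (rule member_le_sum[of y]) auto
  finally show ?thesis .
qed

lemma qX_norm_pos:
  assumes "0 < p (x, y)" "0 < v y"
  shows "0 < qX_norm \<alpha> p v"
proof -
  have "0 < qX_tilt \<alpha> p v x powr (1 / \<alpha>)" using qX_tilt_pos[of p x y v \<alpha>] assms by simp
  also have "\<dots> \<le> qX_norm \<alpha> p v"
    unfolding qX_norm_def by (rule member_le_sum[of x]) auto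
  finally show ?thesis .
qed

lemma qX_star_pos: "0 < p (x, y) \<Longrightarrow> 0 < v y \<Longrightarrow> 0 < qX_star \<alpha> p v x"
  using qX_tilt_pos[of p x y v \<alpha>] qX_norm_pos[of p x y v \<alpha>] by (simp add: qX_star_eq)

lemma qX_star_pos_imp:
  assumes "\<And>z. 0 \<le> p z" "0 < qX_star \<alpha> p v x"
  shows "\<exists>y. 0 < p (x, y)"
proof (rule ccontr)
  assume "\<not> ?thesis"
  then have "p (x, y) = 0" for y using assms(1)[of "(x, y)"] by (simp add: not_less eq_iff)
  then show False using assms(2) by (simp add: qX_star_eq qX_tilt_def)
qed

lemma lp_sum_le_qX_norm:
  assumes "0 < \<alpha>" "\<alpha> < 1" "is_dist u"
  shows "lp_sum \<alpha> p u v \<le> qX_norm \<alpha> p v powr \<alpha>"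
proof (cases "qX_norm \<alpha> p v = 0")
  case False
  then have "renyi_sum \<alpha> (qX_star \<alpha> p v) u \<le> 1"
    using assms qX_norm_nonneg[of \<alpha> p v] by (intro renyi_sum_le_one is_dist_qX_star) auto
  moreover have "\<alpha> \<noteq> 0" using assms by simp
  ultimately show ?thesis
    by (simp add: lp_sum_eq_qX_norm_renyi_sum mult_left_le)
qed (use assms in \<open>simp add: lp_sum_eq_qX_norm_renyi_sum\<close>)

lemma qX_star_lower_bound:
  assumes "0 < \<alpha>" "0 < qX_norm \<alpha> p v" "qX_norm \<alpha> p v powr \<alpha> \<le> 1" "0 \<le> p (x, y)"
  shows "p (x, y) * v y powr ((1 - \<alpha>) / \<alpha>) \<le> qX_star \<alpha> p v x"
proof -
  have norm_le: "qX_norm \<alpha> p v \<le> 1"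
  proof (rule ccontr)
    assume "\<not> qX_norm \<alpha> p v \<le> 1"
    then have "1 powr \<alpha> < qX_norm \<alpha> p v powr \<alpha>" using assms(1) by (intro powr_less_mono2) auto
    then show False using assms(3) by simp
  qed
  have "p (x, y) powr \<alpha> * v y powr (1 - \<alpha>) \<le> qX_tilt \<alpha> p v x"
    unfolding qX_tilt_def by (rule member_le_sum[of y]) auto
  then have "(p (x, y) powr \<alpha> * v y powr (1 - \<alpha>)) powr (1 / \<alpha>) \<le> qX_tilt \<alpha> p v x powr (1 / \<alpha>)"
    using assms by (intro powr_mono2) auto
  also have "\<dots> \<le> qX_star \<alpha> p v x"
    using assms norm_le qX_tilt_nonneg[of \<alpha> p v x] by (simp add: qX_star_eq le_divide_eq mult_left_le)
  finally show ?thesis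
    using assms by (simp add: powr_mult powr_powr)
qed

abbreviation qY_norm :: "real \<Rightarrow> ('x::finite \<times> 'y::finite \<Rightarrow> real) \<Rightarrow> ('x \<Rightarrow> real) \<Rightarrow> real"
  where "qY_norm \<alpha> p u \<equiv> qX_norm \<alpha> (p \<circ> prod.swap) u"

lemma lp_sum_eq_qY_norm_renyi_sum:
  "\<alpha> \<noteq> 0 \<Longrightarrow> lp_sum \<alpha> p u v = qY_norm \<alpha> p u powr \<alpha> * renyi_sum \<alpha> (qY_star \<alpha> p u) v"
  unfolding lp_sum_swap[symmetric, of \<alpha> p u v] qY_star_eq_qX_star_swap
  by (rule lp_sum_eq_qX_norm_renyi_sum)

lemma lp_sum_qY_star: "\<alpha> \<noteq> 0 \<Longrightarrow> lp_sum \<alpha> p u (qY_star \<alpha> p u) = qY_norm \<alpha> p u powr \<alpha>"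
  unfolding lp_sum_swap[symmetric, of \<alpha> p u] qY_star_eq_qX_star_swap
  by (rule lp_sum_qX_star)

lemma lp_sum_le_qY_norm: "0 < \<alpha> \<Longrightarrow> \<alpha> < 1 \<Longrightarrow> is_dist v \<Longrightarrow> lp_sum \<alpha> p u v \<le> qY_norm \<alpha> p u powr \<alpha>"
  unfolding lp_sum_swap[symmetric, of \<alpha> p u v] by (rule lp_sum_le_qX_norm)

lemma qX_norm_le_qY_norm_qX_star:
  assumes "0 < \<alpha>" "\<alpha> < 1" "is_dist v"
  shows "qX_norm \<alpha> p v powr \<alpha> \<le> qY_norm \<alpha> p (qX_star \<alpha> p v) powr \<alpha>"
proof -
  have "qX_norm \<alpha> p v powr \<alpha> = lp_sum \<alpha> p (qX_star \<alpha> p v) v"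
    using assms by (simp add: lp_sum_qX_star)
  also have "\<dots> \<le> qY_norm \<alpha> p (qX_star \<alpha> p v) powr \<alpha>"
    by (rule lp_sum_le_qY_norm[OF assms])
  finally show ?thesis .
qed

lemma qY_norm_le_qX_norm_qY_star:
  assumes "0 < \<alpha>" "\<alpha> < 1" "is_dist u"
  shows "qY_norm \<alpha> p u powr \<alpha> \<le> qX_norm \<alpha> p (qY_star \<alpha> p u) powr \<alpha>"
proof -
  have "qY_norm \<alpha> p u powr \<alpha> = lp_sum \<alpha> p u (qY_star \<alpha> p u)"
    using assms by (simp add: lp_sum_qY_star)
  also have "\<dots> \<le> qX_norm \<alpha> p (qY_star \<alpha> p u) powr \<alpha>"
    by (rule lp_sum_le_qX_norm[OF assms])
  finally show ?thesis .
qed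

section \<open>The alternating algorithm\<close>

locale alternating_optimization =
  fixes \<alpha> :: real
    and p :: "'x::finite \<times> 'y::finite \<Rightarrow> real"
    and qX :: "nat \<Rightarrow> 'x \<Rightarrow> real"
    and qY :: "nat \<Rightarrow> 'y \<Rightarrow> real"
  assumes alpha: "1/2 \<le> \<alpha>" "\<alpha> \<noteq> 1"
    and p: "is_dist p"
    and init_X: "is_dist (qX 0)" "\<forall>x. 0 < qX 0 x"
    and init_Y: "is_dist (qY 0)" "\<forall>y. 0 < qY 0 y"
    and step_X: "\<forall>k. qX (Suc k) = qX_star \<alpha> p (qY k)"
    and step_Y: "\<forall>k. qY (Suc k) = qY_star \<alpha> p (qX (Suc k))"
begin

lemma alpha_pos: "0 < \<alpha>"
  using alpha by simp

lemma alpha_ne_zero: "\<alpha> \<noteq> 0"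
  using alpha by simp

lemma p_nonneg: "0 \<le> p z"
  using p by (rule is_dist_nonneg)

lemma qY_Suc_eq: "qY (Suc k) = qX_star \<alpha> (p \<circ> prod.swap) (qX (Suc k))"
  using step_Y by (simp add: qY_star_eq_qX_star_swap)

lemma iterates_dist_pos:
  "is_dist (qX k) \<and> is_dist (qY k) \<and> (\<forall>x y. 0 < p (x, y) \<longrightarrow> 0 < qX k x \<and> 0 < qY k y)"
proof (induction k)
  case 0
  then show ?case using init_X init_Y by blast
next
  case (Suc k)
  obtain x0 y0 where p0: "0 < p (x0, y0)"
    using is_dist_ex_pos[OF p] unfolding split_paired_Ex by blast
  have X: "0 < qX (Suc k) x" if "0 < p (x, y)" for x y
    using Suc that step_X qX_star_pos[of p x y "qY k"] by auto
  have Y: "0 < qY (Suc k) y" if "0 < p (x, y)" for x y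
    using X[OF that] that qX_star_pos[of "p \<circ> prod.swap" y x "qX (Suc k)"] by (simp add: qY_Suc_eq)
  have "0 < qX_norm \<alpha> p (qY k)"
    using Suc p0 by (intro qX_norm_pos[of p x0 y0]) auto
  then have "is_dist (qX (Suc k))"
    using step_X by (simp add: is_dist_qX_star)
  moreover have "0 < qY_norm \<alpha> p (qX (Suc k))"
    using X[OF p0] p0 by (intro qX_norm_pos[of "p \<circ> prod.swap" y0 x0]) auto
  then have "is_dist (qY (Suc k))"
    unfolding qY_Suc_eq by (rule is_dist_qX_star)
  ultimately show ?case using X Y by blast
qed

lemma is_dist_qX: "is_dist (qX k)"
  using iterates_dist_pos by blast

lemma is_dist_qY: "is_dist (qY k)"
  using iterates_dist_pos by blast

lemma qX_pos: "0 < p (x, y) \<Longrightarrow> 0 < qX k x"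
  using iterates_dist_pos by blast

lemma qY_pos: "0 < p (x, y) \<Longrightarrow> 0 < qY k y"
  using iterates_dist_pos by blast

lemma qX_Suc_pos_imp: "0 < qX (Suc k) x \<Longrightarrow> \<exists>y. 0 < p (x, y)"
  using qX_star_pos_imp[of p \<alpha> "qY k" x] p_nonneg step_X by simp

lemma qY_Suc_pos_imp: "0 < qY (Suc k) y \<Longrightarrow> \<exists>x. 0 < p (x, y)"
  using qX_star_pos_imp[of "p \<circ> prod.swap" \<alpha> "qX (Suc k)" y] p_nonneg by (auto simp: qY_Suc_eq)

lemma qX_Suc_pos_imp_pos: "0 < qX (Suc k) x \<Longrightarrow> 0 < qX k x"
  using qX_Suc_pos_imp qX_pos by blast

lemma qY_Suc_pos_imp_pos: "0 < qY (Suc k) y \<Longrightarrow> 0 < qY k y"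
  using qY_Suc_pos_imp qY_pos by blast

definition F :: "nat \<Rightarrow> real" where "F k = lp_sum \<alpha> p (qX k) (qY k)"

definition H :: "nat \<Rightarrow> real" where "H k = lp_sum \<alpha> p (qX (Suc k)) (qY k)"

lemma H_eq: "H k = qX_norm \<alpha> p (qY k) powr \<alpha>"
  using step_X by (simp add: H_def lp_sum_qX_star alpha_ne_zero)

lemma F_Suc_eq: "F (Suc k) = qY_norm \<alpha> p (qX (Suc k)) powr \<alpha>"
  using step_Y by (simp add: F_def lp_sum_qY_star alpha_ne_zero)

lemma F_eq_H_mult: "F k = H k * renyi_sum \<alpha> (qX (Suc k)) (qX k)"
  using step_X by (simp add: F_def H_eq lp_sum_eq_qX_norm_renyi_sum alpha_ne_zero)

lemma H_eq_F_Suc_mult: "H k = F (Suc k) * renyi_sum \<alpha> (qY (Suc k)) (qY k)"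
  using step_Y by (simp add: H_def F_Suc_eq lp_sum_eq_qY_norm_renyi_sum alpha_ne_zero)

lemma F_pos: "0 < F k"
  using is_dist_ex_pos[OF p] qX_pos qY_pos lp_sum_pos unfolding F_def by fastforce

lemma H_pos: "0 < H k"
  using is_dist_ex_pos[OF p] qX_pos qY_pos lp_sum_pos unfolding H_def by fastforce

lemma sign_F_minus_H: "0 \<le> (\<alpha> - 1) * (F k - H k)"
proof -
  have "0 \<le> (\<alpha> - 1) * (renyi_sum \<alpha> (qX (Suc k)) (qX k) - 1)"
    using alpha_pos qX_Suc_pos_imp_pos by (intro renyi_sum_sign is_dist_qX) auto
  moreover have "(\<alpha> - 1) * (F k - H k) = H k * ((\<alpha> - 1) * (renyi_sum \<alpha> (qX (Suc k)) (qX k) - 1))"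
    by (simp add: F_eq_H_mult algebra_simps)
  ultimately show ?thesis
    using H_pos[of k] by (metis less_imp_le mult_nonneg_nonneg)
qed

lemma sign_H_minus_F_Suc: "0 \<le> (\<alpha> - 1) * (H k - F (Suc k))"
proof -
  have "0 \<le> (\<alpha> - 1) * (renyi_sum \<alpha> (qY (Suc k)) (qY k) - 1)"
    using alpha_pos qY_Suc_pos_imp_pos by (intro renyi_sum_sign is_dist_qY) auto
  moreover have "(\<alpha> - 1) * (H k - F (Suc k)) = F (Suc k) * ((\<alpha> - 1) * (renyi_sum \<alpha> (qY (Suc k)) (qY k) - 1))"
    by (simp add: H_eq_F_Suc_mult algebra_simps)
  ultimately show ?thesis
    using F_pos[of "Suc k"] by (metis less_imp_le mult_nonneg_nonneg)
qed

lemma sign_F_minus_one: "0 \<le> (\<alpha> - 1) * (F k - 1)"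
  unfolding F_def using alpha_pos qX_pos qY_pos
  by (intro lp_sum_sign p is_dist_qX is_dist_qY) auto

lemma sign_H_minus_one: "0 \<le> (\<alpha> - 1) * (H k - 1)"
  using sign_H_minus_F_Suc[of k, unfolded right_diff_distrib]
    sign_F_minus_one[of "Suc k", unfolded right_diff_distrib]
  unfolding right_diff_distrib by linarith

lemma decseq_sign_F: "decseq (\<lambda>k. (\<alpha> - 1) * F k)"
proof (rule decseq_SucI)
  fix k
  show "(\<alpha> - 1) * F (Suc k) \<le> (\<alpha> - 1) * F k"
    using sign_F_minus_H[of k, unfolded right_diff_distrib]
      sign_H_minus_F_Suc[of k, unfolded right_diff_distrib] by linarith
qed

definition L :: real where "L = lim F"

lemma F_tendsto: "F \<longlonglongrightarrow> L"
proof -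
  have "\<forall>k. \<alpha> - 1 \<le> (\<alpha> - 1) * F k"
    using sign_F_minus_one by (simp add: right_diff_distrib)
  then obtain l where "(\<lambda>k. (\<alpha> - 1) * F k) \<longlonglongrightarrow> l"
    using decseq_convergent[OF decseq_sign_F] by blast
  then have "(\<lambda>k. (\<alpha> - 1) * F k / (\<alpha> - 1)) \<longlonglongrightarrow> l / (\<alpha> - 1)"
    using alpha by (intro tendsto_divide tendsto_const) auto
  then have "convergent F"
    using alpha by (auto simp: convergent_def)
  then show ?thesis
    by (simp add: L_def convergent_LIMSEQ_iff)
qed

lemma sign_F_minus_L: "0 \<le> (\<alpha> - 1) * (F k - L)"
  using decseq_ge[OF decseq_sign_F tendsto_mult_left[OF F_tendsto]] by (simp add: algebra_simps)

lemma sign_H_minus_L: "0 \<le> (\<alpha> - 1) * (H k - L)"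
  using sign_H_minus_F_Suc[of k] sign_F_minus_L[of "Suc k"] by (simp add: algebra_simps)

lemma H_tendsto: "H \<longlonglongrightarrow> L"
proof -
  have "(\<lambda>k. (\<alpha> - 1) * H k) \<longlonglongrightarrow> (\<alpha> - 1) * L"
  proof (rule tendsto_sandwich[OF always_eventually always_eventually])
    show "\<forall>k. (\<alpha> - 1) * F (Suc k) \<le> (\<alpha> - 1) * H k"
      using sign_H_minus_F_Suc by (simp add: algebra_simps)
    show "\<forall>k. (\<alpha> - 1) * H k \<le> (\<alpha> - 1) * F k"
      using sign_F_minus_H by (simp add: algebra_simps)
  qed (use F_tendsto LIMSEQ_Suc in \<open>auto intro: tendsto_mult_left\<close>)
  then have "(\<lambda>k. (\<alpha> - 1) * H k / (\<alpha> - 1)) \<longlonglongrightarrow> (\<alpha> - 1) * L / (\<alpha> - 1)"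
    using alpha by (intro tendsto_divide tendsto_const) auto
  then show ?thesis
    using alpha by simp
qed

lemma L_pos: "0 < L"
proof (cases "\<alpha> < 1")
  case True
  then show ?thesis
    using sign_F_minus_L[of 0] F_pos[of 0] by (simp add: zero_le_mult_iff)
next
  case False
  have "1 \<le> F k" for k
    using sign_F_minus_one[of k] False alpha by (simp add: zero_le_mult_iff)
  then have "1 \<le> L"
    using F_tendsto by (intro LIMSEQ_le_const) auto
  then show ?thesis by simp
qed

section \<open>Optimality of the limit\<close>

text \<open>For \<open>\<alpha> < 1\<close> two half-steps give \<open>q \<ge> c q^((1-\<alpha>)/\<alpha>)\<^sup>2\<close>, a recursion with exponent below \<open>1\<close> exactly
  when \<open>\<alpha> > 1/2\<close>; for \<open>\<alpha> > 1\<close> a single term of \<open>F k \<le> F 0\<close> already bounds \<open>qY k y\<close> from below.\<close>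
lemma qY_Suc_lower_bound:
  assumes "\<alpha> < 1" "0 < p (x, y)"
  shows "p (x, y) powr (1 / \<alpha>) * qY k y powr (((1 - \<alpha>) / \<alpha>)\<^sup>2) \<le> qY (Suc k) y"
proof -
  define g where "g = (1 - \<alpha>) / \<alpha>"
  have g: "0 \<le> g" "1 / \<alpha> = 1 + g" using assms(1) alpha_pos by (auto simp: g_def field_simps)
  have qY: "0 < qY k y" and qX: "0 < qX (Suc k) x"
    using qY_pos[OF assms(2)] qX_pos[OF assms(2)] by auto
  have "H k \<le> 1" and "F (Suc k) \<le> 1"
    using sign_H_minus_one[of k] sign_F_minus_one[of "Suc k"] assms(1)
    by (simp_all add: zero_le_mult_iff)
  moreover have "0 < qX_norm \<alpha> p (qY k)" and "0 < qY_norm \<alpha> p (qX (Suc k))"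
    using qX_norm_pos[of p x y "qY k"] qX_norm_pos[of "p \<circ> prod.swap" y x] assms(2) qX qY by auto
  ultimately have X: "p (x, y) * qY k y powr g \<le> qX (Suc k) x"
    and Y: "p (x, y) * qX (Suc k) x powr g \<le> qY (Suc k) y"
    using qX_star_lower_bound[OF alpha_pos, of p "qY k" x y]
      qX_star_lower_bound[OF alpha_pos, of "p \<circ> prod.swap" "qX (Suc k)" y x] assms(2) step_X
    by (simp_all add: H_eq F_Suc_eq qY_Suc_eq g_def)
  have "p (x, y) powr (1 / \<alpha>) * qY k y powr (g\<^sup>2) = p (x, y) * (p (x, y) * qY k y powr g) powr g"
    using assms(2) qY by (simp add: g(2) powr_mult powr_powr powr_add power2_eq_square)
  also have "\<dots> \<le> p (x, y) * qX (Suc k) x powr g"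
    using X assms(2) g qY by (intro mult_left_mono powr_mono2) auto
  finally show ?thesis using Y by (simp add: g_def)
qed

lemma qY_lower_bound_gt1:
  assumes "1 < \<alpha>" "0 < p (x, y)"
  shows "(F 0 / p (x, y) powr \<alpha>) powr (1 / (1 - \<alpha>)) \<le> qY k y"
proof -
  have qY: "0 < qY k y" using qY_pos[OF assms(2)] .
  have "1 \<le> qX k x powr (1 - \<alpha>)"
    using assms(1) qX_pos[OF assms(2), of k] is_dist_le_one[OF is_dist_qX, of k x]
      powr_mono'[of "1 - \<alpha>" 0 "qX k x"] by simp
  then have "p (x, y) powr \<alpha> * qY k y powr (1 - \<alpha>)
      \<le> p (x, y) powr \<alpha> * (qX k x powr (1 - \<alpha>) * qY k y powr (1 - \<alpha>))"
    by (intro mult_left_mono) (auto simp: mult_le_cancel_right1)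
  also have "\<dots> \<le> F k"
    unfolding F_def using lp_sum_term_le[of p x y \<alpha> "qX k" "qY k"] by (simp add: powr_mult)
  also have "\<dots> \<le> F 0"
    using decseq_sign_F assms(1) by (simp add: decseq_def)
  finally have "qY k y powr (1 - \<alpha>) \<le> F 0 / p (x, y) powr \<alpha>"
    using assms by (simp add: field_simps)
  then have "(F 0 / p (x, y) powr \<alpha>) powr (1 / (1 - \<alpha>)) \<le> (qY k y powr (1 - \<alpha>)) powr (1 / (1 - \<alpha>))"
    using assms(1) qY by (intro powr_mono2') auto
  also have "\<dots> = qY k y" using assms(1) qY by (simp add: powr_powr)
  finally show ?thesis .
qed

lemma qY_lower_bound:
  assumes "\<alpha> \<noteq> 1/2" "0 < p (x, y)"
  shows "\<exists>\<delta>>0. \<forall>k. \<delta> \<le> qY k y"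
proof (cases "\<alpha> < 1")
  case True
  have "(1 - \<alpha>) / \<alpha> < 1" using True alpha assms(1) by (auto simp: field_simps)
  then have "((1 - \<alpha>) / \<alpha>)\<^sup>2 < 1" using True alpha_pos by (simp add: power_less_one_iff)
  then show ?thesis
    using True alpha_pos assms(2) qY_pos[OF assms(2), of 0] qY_Suc_lower_bound[OF True assms(2)]
    by (intro lower_bound_of_sublinear_recurrence[of "p (x, y) powr (1 / \<alpha>)" "((1 - \<alpha>) / \<alpha>)\<^sup>2"]) auto
next
  case False
  then have "1 < \<alpha>" using alpha by simp
  moreover have "0 < (F 0 / p (x, y) powr \<alpha>) powr (1 / (1 - \<alpha>))"
    using F_pos[of 0] assms by simp
  ultimately show ?thesis
    using qY_lower_bound_gt1[OF _ assms(2)] by blast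
qed

lemma renyi_sum_qY_tendsto: "(\<lambda>k. renyi_sum \<alpha> (qY (Suc k)) (qY k)) \<longlonglongrightarrow> 1"
proof -
  have "(\<lambda>k. H k / F (Suc k)) \<longlonglongrightarrow> L / L"
    using H_tendsto LIMSEQ_Suc[OF F_tendsto] L_pos by (intro tendsto_divide) auto
  moreover have "H k / F (Suc k) = renyi_sum \<alpha> (qY (Suc k)) (qY k)" for k
    using F_pos[of "Suc k"] by (simp add: H_eq_F_Suc_mult)
  ultimately show ?thesis using L_pos by simp
qed

text \<open>The weighted AM-GM gaps below all have the same sign and add up to \<open>(\<alpha> - 1) * (\<rho> - 1) \<longlonglongrightarrow> 0\<close>.\<close>
lemma qY_ratio_tendsto:
  assumes "\<alpha> \<noteq> 1/2" "0 < p (x, y)"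
  shows "(\<lambda>k. qY (Suc k) y / qY k y) \<longlonglongrightarrow> 1"
proof -
  define gap where "gap k z = (\<alpha> - 1) * (qY (Suc k) z powr \<alpha> * qY k z powr (1 - \<alpha>)
    - \<alpha> * qY (Suc k) z - (1 - \<alpha>) * qY k z)" for k z
  have gap_nonneg: "0 \<le> gap k z" for k z
    unfolding gap_def using alpha_pos qY_Suc_pos_imp_pos
    by (intro weighted_am_gm_sign is_dist_nonneg[OF is_dist_qY]) auto
  have "(\<Sum>z\<in>UNIV. gap k z) = (\<alpha> - 1) * (renyi_sum \<alpha> (qY (Suc k)) (qY k) - 1)" for k
    unfolding gap_def by (simp add: renyi_sum_minus_one_eq_sum is_dist_qY)
  then have gap_le: "gap k y \<le> (\<alpha> - 1) * (renyi_sum \<alpha> (qY (Suc k)) (qY k) - 1)" for k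
    using member_le_sum[of y UNIV "gap k"] gap_nonneg by simp
  have lim: "(\<lambda>k. (\<alpha> - 1) * (renyi_sum \<alpha> (qY (Suc k)) (qY k) - 1)) \<longlonglongrightarrow> 0"
    using tendsto_mult_left[OF tendsto_diff[OF renyi_sum_qY_tendsto tendsto_const[of 1]], of "\<alpha> - 1"]
    by simp
  have "\<forall>\<^sub>F k in sequentially. norm (gap k y) \<le> (\<alpha> - 1) * (renyi_sum \<alpha> (qY (Suc k)) (qY k) - 1)"
    using gap_nonneg gap_le by simp
  from Lim_null_comparison[OF this lim]
  have gap_tendsto: "(\<lambda>k. gap k y) \<longlonglongrightarrow> 0" .
  obtain \<delta> where \<delta>: "0 < \<delta>" "\<And>k. \<delta> \<le> qY k y"
    using qY_lower_bound[OF assms] by blast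
  show ?thesis
    using gap_tendsto unfolding gap_def
    by (rule ratio_tendsto_one_if_am_gm_gap_tendsto_zero[OF alpha_pos alpha(2) \<delta>
          is_dist_nonneg[OF is_dist_qY]])
qed

lemma sum_tilt_qX_Suc:
  "(\<Sum>x\<in>UNIV. \<Sum>y\<in>UNIV. p (x, y) powr \<alpha> * (f x * qY k y powr (1 - \<alpha>)))
    = H k * (\<Sum>x\<in>UNIV. f x * qX (Suc k) x powr \<alpha>)"
proof -
  have tilt: "qX_tilt \<alpha> p (qY k) x = H k * qX (Suc k) x powr \<alpha>" for x
    using qX_tilt_eq[OF alpha_ne_zero, of p "qY k" x] step_X by (simp add: H_eq)
  have "(\<Sum>y\<in>UNIV. p (x, y) powr \<alpha> * (f x * qY k y powr (1 - \<alpha>))) = f x * qX_tilt \<alpha> p (qY k) x" for x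
    by (simp add: qX_tilt_def sum_distrib_left mult_ac)
  then show ?thesis
    by (simp add: tilt sum_distrib_left mult_ac)
qed

lemma sum_tilt_qY_Suc:
  "(\<Sum>x\<in>UNIV. \<Sum>y\<in>UNIV. p (x, y) powr \<alpha> * (qX (Suc k) x powr (1 - \<alpha>) * g y))
    = F (Suc k) * (\<Sum>y\<in>UNIV. g y * qY (Suc k) y powr \<alpha>)"
proof -
  have tilt: "qX_tilt \<alpha> (p \<circ> prod.swap) (qX (Suc k)) y = F (Suc k) * qY (Suc k) y powr \<alpha>" for y
    using qX_tilt_eq[OF alpha_ne_zero, of "p \<circ> prod.swap" "qX (Suc k)" y]
    by (simp add: F_Suc_eq qY_Suc_eq)
  have "(\<Sum>x\<in>UNIV. p (x, y) powr \<alpha> * (qX (Suc k) x powr (1 - \<alpha>) * g y))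
      = g y * qX_tilt \<alpha> (p \<circ> prod.swap) (qX (Suc k)) y" for y
    by (simp add: qX_tilt_def sum_distrib_left mult_ac)
  then show ?thesis
    by (subst sum.swap) (simp add: tilt sum_distrib_left mult_ac)
qed

text \<open>The left side is the tangent plane of \<open>lp_sum\<close> at \<open>(qX (Suc k), qY k)\<close>, evaluated at \<open>(u, v)\<close>.  The quotient
  \<open>qX (Suc k) x / qX (Suc k) x\<close> is the indicator of \<open>qX (Suc k) x \<noteq> 0\<close>, as division by \<open>0\<close> yields \<open>0\<close>.\<close>
lemma tangent_sum_eq:
  "(\<Sum>x\<in>UNIV. \<Sum>y\<in>UNIV. p (x, y) powr \<alpha> * ((2 * \<alpha> - 1) * (qX (Suc k) x * qY k y) powr (1 - \<alpha>)
      + (1 - \<alpha>) * u x * (qX (Suc k) x powr (1 - \<alpha>) / qX (Suc k) x) * qY k y powr (1 - \<alpha>)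
      + (1 - \<alpha>) * v y * qX (Suc k) x powr (1 - \<alpha>) * (qY k y powr (1 - \<alpha>) / qY k y)))
   = (2 * \<alpha> - 1) * H k + (1 - \<alpha>) * H k * (\<Sum>x\<in>UNIV. u x * (qX (Suc k) x / qX (Suc k) x))
     + (1 - \<alpha>) * F (Suc k) * (\<Sum>y\<in>UNIV. v y * (qY (Suc k) y / qY k y) powr \<alpha>)"
proof -
  define s t where "s = qX (Suc k)" and "t = qY k"
  have s: "0 \<le> s x" and t: "0 \<le> t y" for x y
    using is_dist_qX is_dist_qY by (auto simp: s_def t_def is_dist_nonneg)
  have "s x powr (1 - \<alpha>) / s x * s x powr \<alpha> = s x / s x" for x
    using powr_div_self_mult[where t = "s x" and w = "s x" and \<alpha> = \<alpha>] s
    by (cases "s x = 0") simp_all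
  then have X_term: "(1 - \<alpha>) * u x * (s x powr (1 - \<alpha>) / s x) * s x powr \<alpha> = (1 - \<alpha>) * (u x * (s x / s x))"
    for x by (simp only: mult.assoc)
  have "t y powr (1 - \<alpha>) / t y * qY (Suc k) y powr \<alpha> = (qY (Suc k) y / t y) powr \<alpha>" for y
    using t is_dist_nonneg[OF is_dist_qY] by (rule powr_div_self_mult)
  then have Y_term: "(1 - \<alpha>) * v y * (t y powr (1 - \<alpha>) / t y) * qY (Suc k) y powr \<alpha>
      = (1 - \<alpha>) * (v y * (qY (Suc k) y / t y) powr \<alpha>)" for y
    by (simp only: mult.assoc)
  have "(\<Sum>x\<in>UNIV. \<Sum>y\<in>UNIV. p (x, y) powr \<alpha> * ((2 * \<alpha> - 1) * (s x * t y) powr (1 - \<alpha>)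
      + (1 - \<alpha>) * u x * (s x powr (1 - \<alpha>) / s x) * t y powr (1 - \<alpha>)
      + (1 - \<alpha>) * v y * s x powr (1 - \<alpha>) * (t y powr (1 - \<alpha>) / t y)))
    = (2 * \<alpha> - 1) * lp_sum \<alpha> p s t
      + (\<Sum>x\<in>UNIV. \<Sum>y\<in>UNIV. p (x, y) powr \<alpha> * ((1 - \<alpha>) * u x * (s x powr (1 - \<alpha>) / s x) * t y powr (1 - \<alpha>)))
      + (\<Sum>x\<in>UNIV. \<Sum>y\<in>UNIV. p (x, y) powr \<alpha> * (s x powr (1 - \<alpha>) * ((1 - \<alpha>) * v y * (t y powr (1 - \<alpha>) / t y))))"
    by (simp add: lp_sum_eq_double_sum sum.distrib sum_distrib_left distrib_left mult_ac)
  also have "\<dots> = (2 * \<alpha> - 1) * H k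
      + H k * (\<Sum>x\<in>UNIV. (1 - \<alpha>) * u x * (s x powr (1 - \<alpha>) / s x) * s x powr \<alpha>)
      + F (Suc k) * (\<Sum>y\<in>UNIV. (1 - \<alpha>) * v y * (t y powr (1 - \<alpha>) / t y) * qY (Suc k) y powr \<alpha>)"
    unfolding s_def t_def H_def [symmetric] sum_tilt_qX_Suc sum_tilt_qY_Suc ..
  also have "\<dots> = (2 * \<alpha> - 1) * H k + (1 - \<alpha>) * H k * (\<Sum>x\<in>UNIV. u x * (s x / s x))
      + (1 - \<alpha>) * F (Suc k) * (\<Sum>y\<in>UNIV. v y * (qY (Suc k) y / t y) powr \<alpha>)"
    unfolding X_term Y_term by (simp add: sum_distrib_left mult_ac)
  finally show ?thesis
    unfolding s_def t_def .
qed

lemma lp_sum_tangent_bound: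
  assumes u: "is_dist u" and v: "is_dist v"
    and supp: "1 < \<alpha> \<Longrightarrow> \<forall>x y. 0 < p (x, y) \<longrightarrow> 0 < u x \<and> 0 < v y"
  shows "0 \<le> (\<alpha> - 1) * (lp_sum \<alpha> p u v - \<alpha> * H k
    - (1 - \<alpha>) * F (Suc k) * (\<Sum>y\<in>UNIV. v y * (qY (Suc k) y / qY k y) powr \<alpha>))"
proof -
  define T where "T x y = (2 * \<alpha> - 1) * (qX (Suc k) x * qY k y) powr (1 - \<alpha>)
      + (1 - \<alpha>) * u x * (qX (Suc k) x powr (1 - \<alpha>) / qX (Suc k) x) * qY k y powr (1 - \<alpha>)
      + (1 - \<alpha>) * v y * qX (Suc k) x powr (1 - \<alpha>) * (qY k y powr (1 - \<alpha>) / qY k y)" for x y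
  define S where "S = (\<Sum>x\<in>UNIV. u x * (qX (Suc k) x / qX (Suc k) x))"
  define R where "R = (\<Sum>y\<in>UNIV. v y * (qY (Suc k) y / qY k y) powr \<alpha>)"
  have pointwise: "0 \<le> (\<alpha> - 1) * (p (x, y) powr \<alpha> * (u x * v y) powr (1 - \<alpha>) - p (x, y) powr \<alpha> * T x y)"
    for x y
  proof (cases "0 < p (x, y)")
    case True
    have "0 \<le> p (x, y) powr \<alpha> * ((\<alpha> - 1) * ((u x * v y) powr (1 - \<alpha>) - T x y))"
      unfolding T_def using alpha(1) qX_pos[OF True] qY_pos[OF True] supp True
      by (intro mult_nonneg_nonneg[OF powr_ge_zero] powr_prod_tangent_sign_at)
        (auto simp: is_dist_nonneg u v)
    then show ?thesis by (simp add: algebra_simps)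
  next
    case False
    then have "p (x, y) = 0" using p_nonneg[of "(x, y)"] by simp
    then show ?thesis by simp
  qed
  have "0 \<le> (\<Sum>x\<in>UNIV. \<Sum>y\<in>UNIV. (\<alpha> - 1) * (p (x, y) powr \<alpha> * (u x * v y) powr (1 - \<alpha>) - p (x, y) powr \<alpha> * T x y))"
    by (simp add: sum_nonneg pointwise)
  also have "\<dots> = (\<alpha> - 1) * (lp_sum \<alpha> p u v - (\<Sum>x\<in>UNIV. \<Sum>y\<in>UNIV. p (x, y) powr \<alpha> * T x y))"
    by (simp add: lp_sum_eq_double_sum right_diff_distrib sum_subtractf sum_distrib_left)
  also have "\<dots> = (\<alpha> - 1) * (lp_sum \<alpha> p u v - ((2 * \<alpha> - 1) * H k + (1 - \<alpha>) * H k * S + (1 - \<alpha>) * F (Suc k) * R))"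
    unfolding T_def S_def R_def tangent_sum_eq ..
  finally have linearized: "0 \<le> \<dots>" .
  have "S \<le> (\<Sum>x\<in>UNIV. u x)"
    unfolding S_def using u by (intro sum_mono) (auto simp: is_dist_nonneg)
  then have "0 \<le> (\<alpha> - 1)\<^sup>2 * H k * (1 - S)"
    using u H_pos[of k] by (simp add: is_dist_def)
  moreover have "(\<alpha> - 1) * (lp_sum \<alpha> p u v - \<alpha> * H k - (1 - \<alpha>) * F (Suc k) * R)
    = (\<alpha> - 1) * (lp_sum \<alpha> p u v - ((2 * \<alpha> - 1) * H k + (1 - \<alpha>) * H k * S + (1 - \<alpha>) * F (Suc k) * R))
      + (\<alpha> - 1)\<^sup>2 * H k * (1 - S)"
    by (simp add: power2_eq_square algebra_simps)
  ultimately show ?thesis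
    using linearized unfolding R_def by linarith
qed

lemma ratio_sum_tendsto:
  assumes "\<alpha> \<noteq> 1/2"
  shows "(\<lambda>k. \<Sum>y\<in>UNIV. v y * (qY (Suc k) y / qY k y) powr \<alpha>)
    \<longlonglongrightarrow> (\<Sum>y\<in>UNIV. v y * of_bool (\<exists>x. 0 < p (x, y)))"
proof (rule tendsto_sum)
  fix y
  show "(\<lambda>k. v y * (qY (Suc k) y / qY k y) powr \<alpha>) \<longlonglongrightarrow> v y * of_bool (\<exists>x. 0 < p (x, y))"
  proof (cases "\<exists>x. 0 < p (x, y)")
    case True
    then obtain x where "0 < p (x, y)" by blast
    from tendsto_powr[OF qY_ratio_tendsto[OF assms this] tendsto_const, of \<alpha>]
    have "(\<lambda>k. (qY (Suc k) y / qY k y) powr \<alpha>) \<longlonglongrightarrow> 1" by simp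
    from tendsto_mult_left[OF this, of "v y"] show ?thesis using True by simp
  next
    case False
    then have "qY (Suc k) y = 0" for k
      using qY_Suc_pos_imp[of k y] is_dist_nonneg[OF is_dist_qY, of "Suc k" y] by force
    then show ?thesis using False by simp
  qed
qed

lemma lp_sum_optimal_ne_half:
  assumes "\<alpha> \<noteq> 1/2" "is_dist u" "is_dist v" "1 < \<alpha> \<Longrightarrow> \<forall>x y. 0 < p (x, y) \<longrightarrow> 0 < u x \<and> 0 < v y"
  shows "0 \<le> (\<alpha> - 1) * (lp_sum \<alpha> p u v - L)"
proof -
  define S where "S = (\<Sum>y\<in>UNIV. v y * of_bool (\<exists>x. 0 < p (x, y)))"
  have "(\<lambda>k. (\<alpha> - 1) * (lp_sum \<alpha> p u v - \<alpha> * H k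
      - (1 - \<alpha>) * F (Suc k) * (\<Sum>y\<in>UNIV. v y * (qY (Suc k) y / qY k y) powr \<alpha>)))
    \<longlonglongrightarrow> (\<alpha> - 1) * (lp_sum \<alpha> p u v - \<alpha> * L - (1 - \<alpha>) * L * S)"
    unfolding S_def
    by (intro tendsto_intros H_tendsto LIMSEQ_Suc[OF F_tendsto] ratio_sum_tendsto assms(1))
  then have lim: "0 \<le> (\<alpha> - 1) * (lp_sum \<alpha> p u v - \<alpha> * L - (1 - \<alpha>) * L * S)"
    by (rule LIMSEQ_le_const) (use lp_sum_tangent_bound[OF assms(2-4)] in auto)
  have "S \<le> (\<Sum>y\<in>UNIV. v y)"
    unfolding S_def using assms(3) by (intro sum_mono) (auto simp: is_dist_nonneg)
  then have "0 \<le> (\<alpha> - 1)\<^sup>2 * L * (1 - S)"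
    using assms(3) L_pos by (simp add: is_dist_def)
  moreover have "(\<alpha> - 1) * (lp_sum \<alpha> p u v - L)
    = (\<alpha> - 1) * (lp_sum \<alpha> p u v - \<alpha> * L - (1 - \<alpha>) * L * S) + (\<alpha> - 1)\<^sup>2 * L * (1 - S)"
    by (simp add: power2_eq_square algebra_simps)
  ultimately show ?thesis
    using lim by linarith
qed

text \<open>For \<open>\<alpha> = 1/2\<close> this is one step of the power iteration.\<close>
definition sweep :: "('y \<Rightarrow> real) \<Rightarrow> 'y \<Rightarrow> real"
  where "sweep v = qY_star \<alpha> p (qX_star \<alpha> p v)"

lemma sweep_mono:
  assumes "\<alpha> < 1" "is_dist v" "0 < qX_norm \<alpha> p v"
  shows "qX_norm \<alpha> p v powr \<alpha> \<le> qY_norm \<alpha> p (qX_star \<alpha> p v) powr \<alpha>"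
    and "qY_norm \<alpha> p (qX_star \<alpha> p v) powr \<alpha> \<le> qX_norm \<alpha> p (sweep v) powr \<alpha>"
    and "is_dist (sweep v)" and "0 < qX_norm \<alpha> p (sweep v)"
proof -
  show first: "qX_norm \<alpha> p v powr \<alpha> \<le> qY_norm \<alpha> p (qX_star \<alpha> p v) powr \<alpha>"
    using alpha_pos assms by (intro qX_norm_le_qY_norm_qX_star)
  have "is_dist (qX_star \<alpha> p v)"
    using assms(3) by (rule is_dist_qX_star)
  then show second: "qY_norm \<alpha> p (qX_star \<alpha> p v) powr \<alpha> \<le> qX_norm \<alpha> p (sweep v) powr \<alpha>"
    unfolding sweep_def using alpha_pos assms(1) by (intro qY_norm_le_qX_norm_qY_star)
  have "0 < qX_norm \<alpha> p v powr \<alpha>" using assms(3) by simp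
  then have "0 < qY_norm \<alpha> p (qX_star \<alpha> p v)"
    using first qX_norm_nonneg[of \<alpha> "p \<circ> prod.swap" "qX_star \<alpha> p v"]
    by (cases "qY_norm \<alpha> p (qX_star \<alpha> p v) = 0") auto
  then show "is_dist (sweep v)"
    unfolding sweep_def qY_star_eq_qX_star_swap by (rule is_dist_qX_star)
  show "0 < qX_norm \<alpha> p (sweep v)"
    using \<open>0 < qX_norm \<alpha> p v powr \<alpha>\<close> first second qX_norm_nonneg[of \<alpha> p "sweep v"]
    by (cases "qX_norm \<alpha> p (sweep v) = 0") auto
qed

lemma is_dist_funpow_sweep:
  "\<alpha> < 1 \<Longrightarrow> is_dist v \<Longrightarrow> 0 < qX_norm \<alpha> p v \<Longrightarrow> is_dist ((sweep ^^ n) v)"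
proof (induction n arbitrary: v)
  case (Suc n)
  then show ?case using sweep_mono(3,4)[OF Suc.prems] by (simp add: funpow_swap1)
qed simp

text \<open>Factoring \<open>lp_sum\<close> once through the \<open>X\<close>-step and once through the \<open>Y\<close>-step reduces both sides to
  \<open>H j * Z(w)^\<alpha>\<close> times the Renyi sum of \<open>qX_star \<alpha> p w\<close> and \<open>qX (Suc j)\<close>, taken in opposite orders;
  at \<open>\<alpha> = 1/2\<close> the Renyi sum is symmetric.\<close>
lemma sweep_adjoint_half:
  assumes "\<alpha> = 1/2"
  shows "qX_norm \<alpha> p w powr \<alpha> * qY_norm \<alpha> p (qX_star \<alpha> p w) powr \<alpha> * renyi_sum \<alpha> (sweep w) (qY j)
    = H j * F (Suc j) * renyi_sum \<alpha> (qY (Suc j)) w"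
proof -
  define u where "u = qX_star \<alpha> p w"
  have commute: "renyi_sum \<alpha> u (qX (Suc j)) = renyi_sum \<alpha> (qX (Suc j)) u"
    unfolding assms by (rule renyi_sum_half_commute)
  have "qY_norm \<alpha> p u powr \<alpha> * renyi_sum \<alpha> (sweep w) (qY j) = lp_sum \<alpha> p u (qY j)"
    by (simp add: lp_sum_eq_qY_norm_renyi_sum alpha_ne_zero sweep_def u_def)
  also have "\<dots> = H j * renyi_sum \<alpha> (qX (Suc j)) u"
    using step_X by (simp add: lp_sum_eq_qX_norm_renyi_sum alpha_ne_zero H_eq)
  finally have X_side: "qX_norm \<alpha> p w powr \<alpha> * qY_norm \<alpha> p u powr \<alpha> * renyi_sum \<alpha> (sweep w) (qY j)
      = H j * (qX_norm \<alpha> p w powr \<alpha> * renyi_sum \<alpha> u (qX (Suc j)))"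
    by (simp add: commute mult_ac)
  have "qX_norm \<alpha> p w powr \<alpha> * renyi_sum \<alpha> u (qX (Suc j)) = lp_sum \<alpha> p (qX (Suc j)) w"
    by (simp add: lp_sum_eq_qX_norm_renyi_sum alpha_ne_zero u_def)
  also have "\<dots> = F (Suc j) * renyi_sum \<alpha> (qY (Suc j)) w"
    using step_Y by (simp add: lp_sum_eq_qY_norm_renyi_sum alpha_ne_zero F_Suc_eq)
  finally show ?thesis
    using X_side by (simp add: u_def mult_ac)
qed

lemma funpow_sweep_bound_half:
  assumes half: "\<alpha> = 1/2"
  shows "is_dist v \<Longrightarrow> 0 < qX_norm \<alpha> p v \<Longrightarrow>
    (qX_norm \<alpha> p v powr \<alpha>) ^ (2 * n) * renyi_sum \<alpha> ((sweep ^^ n) v) (qY 0)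
      \<le> L ^ (2 * n) * renyi_sum \<alpha> (qY n) v"
proof (induction n arbitrary: v)
  case 0
  then show ?case unfolding half by (simp add: renyi_sum_half_commute)
next
  case (Suc n)
  have lt1: "\<alpha> < 1" using half by simp
  define G where "G = qX_norm \<alpha> p v powr \<alpha>"
  define GY where "GY = qY_norm \<alpha> p (qX_star \<alpha> p v) powr \<alpha>"
  note mono = sweep_mono[OF lt1 Suc.prems, folded G_def GY_def]
  have G: "0 \<le> G" by (simp add: G_def)
  have HL: "H n \<le> L" and FL: "F (Suc n) \<le> L"
    using sign_H_minus_L[of n] sign_F_minus_L[of "Suc n"] lt1 by (simp_all add: zero_le_mult_iff)
  have "G ^ (2 * Suc n) * renyi_sum \<alpha> ((sweep ^^ Suc n) v) (qY 0)
      = G\<^sup>2 * (G ^ (2 * n) * renyi_sum \<alpha> ((sweep ^^ n) (sweep v)) (qY 0))"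
    by (simp add: funpow_swap1 power_add power_mult power2_eq_square mult_ac)
  also have "\<dots> \<le> G\<^sup>2 * ((qX_norm \<alpha> p (sweep v) powr \<alpha>) ^ (2 * n) * renyi_sum \<alpha> ((sweep ^^ n) (sweep v)) (qY 0))"
    using mono(1,2) G by (intro mult_left_mono mult_right_mono power_mono renyi_sum_nonneg) auto
  also have "\<dots> \<le> G\<^sup>2 * (L ^ (2 * n) * renyi_sum \<alpha> (qY n) (sweep v))"
    using Suc.IH[OF mono(3,4)] by (intro mult_left_mono) auto
  also have "\<dots> = L ^ (2 * n) * (G * G * renyi_sum \<alpha> (sweep v) (qY n))"
    unfolding half by (simp add: renyi_sum_half_commute power2_eq_square mult_ac)
  also have "\<dots> \<le> L ^ (2 * n) * (G * GY * renyi_sum \<alpha> (sweep v) (qY n))"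
    using mono(1) G L_pos by (intro mult_left_mono mult_right_mono renyi_sum_nonneg) auto
  also have "\<dots> = L ^ (2 * n) * (H n * F (Suc n) * renyi_sum \<alpha> (qY (Suc n)) v)"
    using sweep_adjoint_half[OF half, of v n] by (simp add: G_def GY_def)
  also have "\<dots> \<le> L ^ (2 * n) * (L * L * renyi_sum \<alpha> (qY (Suc n)) v)"
    using HL FL H_pos[of n] F_pos[of "Suc n"] L_pos
    by (intro mult_left_mono mult_right_mono mult_mono renyi_sum_nonneg) auto
  also have "\<dots> = L ^ (2 * Suc n) * renyi_sum \<alpha> (qY (Suc n)) v"
    by (simp add: power_add power_mult power2_eq_square mult_ac)
  finally show ?case by (simp add: G_def)
qed

lemma qX_norm_le_L_half:
  assumes half: "\<alpha> = 1/2" and v: "is_dist v"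
  shows "qX_norm \<alpha> p v powr \<alpha> \<le> L"
proof (cases "qX_norm \<alpha> p v = 0")
  case True
  then show ?thesis using L_pos by simp
next
  case False
  then have pos: "0 < qX_norm \<alpha> p v" using qX_norm_nonneg[of \<alpha> p v] by simp
  have lt1: "\<alpha> < 1" using half by simp
  define \<mu> where "\<mu> = Min (range (\<lambda>y. qY 0 y powr (1 - \<alpha>)))"
  have "0 < qY 0 y powr (1 - \<alpha>)" for y
    using init_Y(2)[rule_format, of y] by simp
  then have \<mu>: "0 < \<mu>" "\<And>y. \<mu> \<le> qY 0 y powr (1 - \<alpha>)"
    by (auto simp: \<mu>_def)
  have bound: "((qX_norm \<alpha> p v powr \<alpha>)\<^sup>2) ^ n * \<mu> \<le> (L\<^sup>2) ^ n" for n
  proof -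
    have "\<mu> \<le> renyi_sum \<alpha> ((sweep ^^ n) v) (qY 0)"
      using alpha_pos lt1 is_dist_funpow_sweep[OF lt1 v pos] \<mu> by (intro renyi_sum_ge_min) auto
    then have "((qX_norm \<alpha> p v powr \<alpha>)\<^sup>2) ^ n * \<mu>
        \<le> (qX_norm \<alpha> p v powr \<alpha>) ^ (2 * n) * renyi_sum \<alpha> ((sweep ^^ n) v) (qY 0)"
      by (simp add: power_mult mult_left_mono)
    also have "\<dots> \<le> L ^ (2 * n) * renyi_sum \<alpha> (qY n) v"
      using funpow_sweep_bound_half[OF half v pos] .
    also have "\<dots> \<le> L ^ (2 * n)"
      using alpha_pos lt1 is_dist_qY v L_pos
      by (intro mult_left_le renyi_sum_le_one) auto
    finally show ?thesis by (simp add: power_mult)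
  qed
  then have "(qX_norm \<alpha> p v powr \<alpha>)\<^sup>2 \<le> L\<^sup>2"
    using L_pos by (intro le_if_powers_bounded[OF \<mu>(1) _ bound]) simp
  from power2_le_imp_le[OF this] show ?thesis
    using L_pos by simp
qed

lemma lp_sum_optimal:
  assumes "is_dist u" "is_dist v" "1 < \<alpha> \<Longrightarrow> \<forall>x y. 0 < p (x, y) \<longrightarrow> 0 < u x \<and> 0 < v y"
  shows "0 \<le> (\<alpha> - 1) * (lp_sum \<alpha> p u v - L)"
proof (cases "\<alpha> = 1/2")
  case True
  have "lp_sum \<alpha> p u v \<le> qX_norm \<alpha> p v powr \<alpha>"
    using True assms(1) by (intro lp_sum_le_qX_norm) auto
  also have "\<dots> \<le> L"
    using True assms(2) by (rule qX_norm_le_L_half)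
  finally have "lp_sum \<alpha> p u v - L \<le> 0" by simp
  moreover have "\<alpha> - 1 \<le> 0" using True by simp
  ultimately show ?thesis by (rule mult_nonpos_nonpos[rotated])
next
  case False
  then show ?thesis using assms by (rule lp_sum_optimal_ne_half)
qed

lemma renyi_div_iterate: "renyi_div \<alpha> p (\<lambda>(x, y). qX k x * qY k y) = ereal (ln (F k) / (\<alpha> - 1))"
proof -
  have "qX k x * qY k y \<noteq> 0" if "0 < p (x, y)" for x y
    using qX_pos[OF that, of k] qY_pos[OF that, of k] by simp
  then show ?thesis
    using F_pos[of k] by (auto simp: renyi_div_prod_eq F_def)
qed

lemma renyi_div_lower_bound:
  assumes "is_dist u" "is_dist v"
  shows "ereal (ln L / (\<alpha> - 1)) \<le> renyi_div \<alpha> p (\<lambda>(x, y). u x * v y)"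
proof (cases "(1 < \<alpha> \<and> (\<exists>x y. 0 < p (x, y) \<and> u x * v y = 0)) \<or> lp_sum \<alpha> p u v = 0")
  case False
  then have pos: "0 < lp_sum \<alpha> p u v"
    using lp_sum_nonneg[of \<alpha> p u v] by simp
  have "0 < u x \<and> 0 < v y" if "1 < \<alpha>" "0 < p (x, y)" for x y
    using False that is_dist_nonneg[OF assms(1), of x] is_dist_nonneg[OF assms(2), of y]
    by (auto simp: less_le)
  then have "0 \<le> (\<alpha> - 1) * (lp_sum \<alpha> p u v - L)"
    using assms by (intro lp_sum_optimal) auto
  then have "ln L / (\<alpha> - 1) \<le> ln (lp_sum \<alpha> p u v) / (\<alpha> - 1)"
    using L_pos pos by (intro ln_div_le_ln_div) auto
  then show ?thesis
    using False by (simp add: renyi_div_prod_eq)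
qed (simp add: renyi_div_prod_eq)

end

lemma tendsto_I_LP:
  assumes "\<And>k. is_dist (u k)" "\<And>k. is_dist (v k)"
    and lim: "(\<lambda>k. renyi_div \<alpha> p (\<lambda>(x, y). u k x * v k y)) \<longlonglongrightarrow> l"
    and lower: "\<And>u' v'. is_dist u' \<Longrightarrow> is_dist v' \<Longrightarrow> l \<le> renyi_div \<alpha> p (\<lambda>(x, y). u' x * v' y)"
  shows "(\<lambda>k. renyi_div \<alpha> p (\<lambda>(x, y). u k x * v k y)) \<longlonglongrightarrow> I_LP \<alpha> p"
proof -
  have "I_LP \<alpha> p \<le> renyi_div \<alpha> p (\<lambda>(x, y). u k x * v k y)" for k
    unfolding I_LP_def using assms(1,2) by (intro INF_lower2[of "u k"] INF_lower2[of "v k"]) auto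
  then have "I_LP \<alpha> p \<le> l"
    by (intro LIMSEQ_le_const[OF lim]) auto
  moreover have "l \<le> I_LP \<alpha> p"
    unfolding I_LP_def using lower by (intro INF_greatest) auto
  ultimately show ?thesis using lim by simp
qed

theorem proposition7:
  fixes \<alpha> :: real
    and p :: "'x::finite \<times> 'y::finite \<Rightarrow> real"
    and qX :: "nat \<Rightarrow> 'x \<Rightarrow> real"
    and qY :: "nat \<Rightarrow> 'y \<Rightarrow> real"
  assumes alpha: "1/2 \<le> \<alpha>" "\<alpha> \<noteq> 1"
    and p: "is_dist p"
    and init_X: "is_dist (qX 0)" "\<forall>x. 0 < qX 0 x"
    and init_Y: "is_dist (qY 0)" "\<forall>y. 0 < qY 0 y"
    and step_X: "\<forall>k. qX (Suc k) = qX_star \<alpha> p (qY k)"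
    and step_Y: "\<forall>k. qY (Suc k) = qY_star \<alpha> p (qX (Suc k))"
  shows "(\<lambda>k. renyi_div \<alpha> p (\<lambda>(x, y). qX k x * qY k y)) \<longlonglongrightarrow> I_LP \<alpha> p"
proof -
  interpret alternating_optimization \<alpha> p qX qY
    using assms by unfold_locales
  have "(\<lambda>k. renyi_div \<alpha> p (\<lambda>(x, y). qX k x * qY k y)) \<longlonglongrightarrow> ereal (ln L / (\<alpha> - 1))"
    unfolding renyi_div_iterate lim_ereal
    using F_tendsto L_pos alpha by (intro tendsto_intros) auto
  from tendsto_I_LP[OF is_dist_qX is_dist_qY this renyi_div_lower_bound] show ?thesis .
qed

end
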